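(* Let $G$ be a group acting on a ring $A$ from the right, $a\mapsto a^g$, such that each map $a\mapsto a^g$ is a ring automorphism. (a) For all $a,b\in A$ and $g\in G$: $[D^1(ab)](g)=a^g\cdot[D^1b](g)+[D^1a](g)\cdot b$. (b) Let $m,n\in\mathbb Z_+$ with $m+n\ge1$. If $a,b\in A$ satisfy $D^ma=0$ and $D^nb=0$, then $D^{m+n-1}(ab)=0$. Equivalently, $ab\in\mathcal P_{m+n}(G,A)$ whenever $a\in\mathcal P_m(G,A)$ and $b\in\mathcal P_n(G,A)$. In particular, the set $\mathcal P(G,A)=\bigcup_{n\ge0}\mathcal P_n(G,A)$ of all polynomial-like elements is a subring of $A$. (c) For each $n\in\mathbb N$, $D^n$ is $A^G$-linear: if $a\in A^G$ then $D^n(ab)=a\,D^nb$ for all $b\in A$.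
   Context: Right action: $a^{\mathbf e}=a$, $(a^g)^h=a^{gh}$, $\mathbf e$ the identity of $G$. $A^G=\{a:a^g=a\ \forall g\}$. $\mathcal C^0(G,A)=A$; for $n\ge1$, $\mathcal C^n(G,A)$ is the set of functions $G^n\to A$ vanishing whenever some argument is $\mathbf e$ (with pointwise operations, and $a\cdot c$ defined pointwise for $a\in A$). For $n\ge1$, $(d_nc)(g_1,\dots,g_n)=[c(g_1,\dots,g_{n-1})]^{g_n}-c(g_1,\dots,g_{n-1})$; $D^0=\mathrm{id}_A$, $D^n=d_nD^{n-1}$; $\mathcal P_n(G,A)=\ker D^{n+1}$. *)

theory Defs
  imports "HOL-Algebra.Group"
begin

definition right_ring_action :: "('g, 'm) monoid_scheme \<Rightarrow> ('a::ring_1 \<Rightarrow> 'g \<Rightarrow> 'a) \<Rightarrow> bool" where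
  "right_ring_action G act \<longleftrightarrow>
     group G \<and>
     (\<forall>a. act a \<one>\<^bsub>G\<^esub> = a) \<and>
     (\<forall>a. \<forall>g\<in>carrier G. \<forall>h\<in>carrier G. act (act a g) h = act a (g \<otimes>\<^bsub>G\<^esub> h)) \<and>
     (\<forall>g\<in>carrier G. bij (\<lambda>a. act a g) \<and>
        (\<forall>a b. act (a + b) g = act a g + act b g) \<and>
        (\<forall>a b. act (a * b) g = act a g * act b g) \<and>
        act 1 g = 1)"

text \<open>n-cochains are represented as functions on lists of group elements; only lists of
  length n with entries in carrier G are meaningful.\<close>
primrec Dop :: "('a::ring_1 \<Rightarrow> 'g \<Rightarrow> 'a) \<Rightarrow> nat \<Rightarrow> 'a \<Rightarrow> ('g list \<Rightarrow> 'a)" where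
  "Dop act 0 a = (\<lambda>gs. a)"
| "Dop act (Suc n) a = (\<lambda>gs. act (Dop act n a (butlast gs)) (last gs) - Dop act n a (butlast gs))"

definition tuples :: "('g, 'm) monoid_scheme \<Rightarrow> nat \<Rightarrow> 'g list set" where
  "tuples G n = {gs. length gs = n \<and> set gs \<subseteq> carrier G}"

definition cochain_zero :: "('g, 'm) monoid_scheme \<Rightarrow> nat \<Rightarrow> ('g list \<Rightarrow> 'a::zero) \<Rightarrow> bool" where
  "cochain_zero G n c \<longleftrightarrow> (\<forall>gs\<in>tuples G n. c gs = 0)"

definition Pn :: "('g, 'm) monoid_scheme \<Rightarrow> ('a::ring_1 \<Rightarrow> 'g \<Rightarrow> 'a) \<Rightarrow> nat \<Rightarrow> 'a set" where
  "Pn G act n = {a. cochain_zero G (Suc n) (Dop act (Suc n) a)}"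

definition Pall :: "('g, 'm) monoid_scheme \<Rightarrow> ('a::ring_1 \<Rightarrow> 'g \<Rightarrow> 'a) \<Rightarrow> 'a set" where
  "Pall G act = (\<Union>n. Pn G act n)"

definition invariants :: "('g, 'm) monoid_scheme \<Rightarrow> ('a \<Rightarrow> 'g \<Rightarrow> 'a) \<Rightarrow> 'a set" where
  "invariants G act = {a. \<forall>g\<in>carrier G. act a g = a}"

end

theory Submission
  imports Defs
begin

text \<open>The recursion for D^k peels off the last group element; peeling off the first one
  instead shows that D^(k+1) a vanishes iff every difference a^g - a lies in the kernel of D^k.
  In this form the kernels are visibly additive subgroups, stable under the action because
  a^(gh) - a^g = (a^(gh) - a) - (a^g - a), and the product rule
  (ab)^g - ab = a^g (b^g - b) + (a^g - a) b gives ker D^m * ker D^n \<subseteq> ker D^(m+n-1)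
  by induction on m + n.\<close>

definition kerD :: "('g, 'm) monoid_scheme \<Rightarrow> ('a::ring_1 \<Rightarrow> 'g \<Rightarrow> 'a) \<Rightarrow> nat \<Rightarrow> 'a set" where
  "kerD G act k = {a. cochain_zero G k (Dop act k a)}"

lemma Pn_eq_kerD: "Pn G act n = kerD G act (Suc n)"
  unfolding Pn_def kerD_def ..

lemma Dop_Suc_Cons:
  "length hs = k \<Longrightarrow> Dop act (Suc k) a (g # hs) = Dop act k (act a g - a) hs"
proof (induction k arbitrary: hs)
  case 0
  then show ?case by simp
next
  case (Suc k)
  then have "hs \<noteq> []" "length (butlast hs) = k" by auto
  then show ?case using Suc.IH by simp
qed

lemma kerD_0: "kerD G act 0 = {0}"
  unfolding kerD_def cochain_zero_def tuples_def by auto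

lemma tuples_Suc: "tuples G (Suc k) = (\<lambda>(g, hs). g # hs) ` (carrier G \<times> tuples G k)"
  by (auto simp: tuples_def length_Suc_conv)

lemma kerD_Suc: "a \<in> kerD G act (Suc k) \<longleftrightarrow> (\<forall>g\<in>carrier G. act a g - a \<in> kerD G act k)"
  unfolding kerD_def cochain_zero_def tuples_Suc
  by (auto simp: tuples_def Dop_Suc_Cons simp del: Dop.simps)

context
  fixes G :: "('g, 'm) monoid_scheme" and act :: "'a::ring_1 \<Rightarrow> 'g \<Rightarrow> 'a"
  assumes action: "right_ring_action G act"
begin

lemma act_add: "g \<in> carrier G \<Longrightarrow> act (a + b) g = act a g + act b g"
  using action unfolding right_ring_action_def by blast

lemma act_diff: "g \<in> carrier G \<Longrightarrow> act (a - b) g = act a g - act b g"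
  using act_add[of g "a - b" b] by (simp add: eq_diff_eq)

lemma act_zero: "g \<in> carrier G \<Longrightarrow> act 0 g = 0"
  using act_diff[of g 0 0] by simp

lemma act_mult: "g \<in> carrier G \<Longrightarrow> act (a * b) g = act a g * act b g"
  using action unfolding right_ring_action_def by blast

lemma act_one: "g \<in> carrier G \<Longrightarrow> act 1 g = 1"
  using action unfolding right_ring_action_def by blast

lemma act_act: "g \<in> carrier G \<Longrightarrow> h \<in> carrier G \<Longrightarrow> act (act a g) h = act a (g \<otimes>\<^bsub>G\<^esub> h)"
  using action unfolding right_ring_action_def by blast

lemma mult_closed: "g \<in> carrier G \<Longrightarrow> h \<in> carrier G \<Longrightarrow> g \<otimes>\<^bsub>G\<^esub> h \<in> carrier G"
  using action unfolding right_ring_action_def by (blast intro: group.subgroup_self subgroup.m_closed)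

lemma zero_in_kerD: "0 \<in> kerD G act k"
  by (induction k) (simp_all add: kerD_0 kerD_Suc act_zero)

lemma kerD_diff: "a \<in> kerD G act k \<Longrightarrow> b \<in> kerD G act k \<Longrightarrow> a - b \<in> kerD G act k"
proof (induction k arbitrary: a b)
  case 0
  then show ?case by (simp add: kerD_0)
next
  case (Suc k)
  show ?case unfolding kerD_Suc
  proof
    fix g assume g: "g \<in> carrier G"
    have "act a g - a \<in> kerD G act k" "act b g - b \<in> kerD G act k"
      using Suc.prems g by (auto simp: kerD_Suc)
    then have "(act a g - a) - (act b g - b) \<in> kerD G act k"
      by (rule Suc.IH)
    then show "act (a - b) g - (a - b) \<in> kerD G act k"
      by (simp add: act_diff[OF g] algebra_simps)
  qed
qed

lemma kerD_uminus: "a \<in> kerD G act k \<Longrightarrow> - a \<in> kerD G act k"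
  using kerD_diff[OF zero_in_kerD] by fastforce

lemma kerD_add: "a \<in> kerD G act k \<Longrightarrow> b \<in> kerD G act k \<Longrightarrow> a + b \<in> kerD G act k"
  using kerD_diff[OF _ kerD_uminus, of a k b] by simp

lemma kerD_Suc_mono: "kerD G act k \<subseteq> kerD G act (Suc k)"
proof (induction k)
  case 0
  then show ?case by (auto simp: kerD_0 kerD_Suc act_zero)
next
  case (Suc k)
  show ?case
  proof
    fix a assume "a \<in> kerD G act (Suc k)"
    then show "a \<in> kerD G act (Suc (Suc k))"
      unfolding kerD_Suc[of a] using Suc.IH by blast
  qed
qed

lemma kerD_mono: "k \<le> j \<Longrightarrow> kerD G act k \<subseteq> kerD G act j"
  by (rule lift_Suc_mono_le[of "kerD G act"]) (use kerD_Suc_mono in auto)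

lemma kerD_act: "a \<in> kerD G act k \<Longrightarrow> g \<in> carrier G \<Longrightarrow> act a g \<in> kerD G act k"
proof (induction k arbitrary: a)
  case 0
  then show ?case by (simp add: kerD_0 act_zero)
next
  case (Suc k)
  show ?case unfolding kerD_Suc
  proof
    fix h assume h: "h \<in> carrier G"
    have "act a (g \<otimes>\<^bsub>G\<^esub> h) - a \<in> kerD G act k" "act a g - a \<in> kerD G act k"
      using Suc.prems h mult_closed by (auto simp: kerD_Suc)
    then have "(act a (g \<otimes>\<^bsub>G\<^esub> h) - a) - (act a g - a) \<in> kerD G act k"
      by (rule kerD_diff)
    then show "act (act a g) h - act a g \<in> kerD G act k"
      by (simp add: act_act[OF Suc.prems(2) h])
  qed
qed

text \<open>For \<open>m = 0\<close> or \<open>n = 0\<close> the truncated index \<open>m + n - 1\<close> is harmless, as then \<open>ab = 0\<close>.\<close>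

lemma kerD_mult: "a \<in> kerD G act m \<Longrightarrow> b \<in> kerD G act n \<Longrightarrow> a * b \<in> kerD G act (m + n - 1)"
proof (induction "m + n" arbitrary: m n a b rule: less_induct)
  case less
  show ?case
  proof (cases "m = 0 \<or> n = 0")
    case True
    then have "a * b = 0" using less.prems by (auto simp: kerD_0)
    then show ?thesis by (simp add: zero_in_kerD)
  next
    case False
    then obtain m' n' where m: "m = Suc m'" and n: "n = Suc n'" by (meson not0_implies_Suc)
    have "act (a * b) g - a * b \<in> kerD G act (m' + n')" if g: "g \<in> carrier G" for g
    proof -
      have "act a g * (act b g - b) \<in> kerD G act (m + n' - 1)"
        using less n g by (simp add: kerD_act kerD_Suc)
      moreover have "(act a g - a) * b \<in> kerD G act (m' + n - 1)"
        using less m g by (simp add: kerD_Suc)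
      moreover have "act (a * b) g - a * b = act a g * (act b g - b) + (act a g - a) * b"
        using act_mult[OF g] by (simp add: algebra_simps)
      ultimately show ?thesis using m n by (simp add: kerD_add)
    qed
    then show ?thesis using m n by (simp add: kerD_Suc)
  qed
qed

lemma Pn_mult: "a \<in> Pn G act m \<Longrightarrow> b \<in> Pn G act n \<Longrightarrow> a * b \<in> Pn G act (m + n)"
  using kerD_mult[of a "Suc m" b "Suc n"] by (simp add: Pn_eq_kerD)

lemma zero_in_Pall: "0 \<in> Pall G act"
  using zero_in_kerD unfolding Pall_def Pn_eq_kerD by blast

lemma one_in_Pall: "1 \<in> Pall G act"
proof -
  have "1 \<in> kerD G act (Suc 0)"
    by (simp add: kerD_Suc kerD_0 act_one)
  then show ?thesis unfolding Pall_def Pn_eq_kerD by blast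
qed

lemma Pall_closed:
  assumes "a \<in> Pall G act" "b \<in> Pall G act"
  shows "a + b \<in> Pall G act" "a - b \<in> Pall G act" "- a \<in> Pall G act" "a * b \<in> Pall G act"
proof -
  obtain m n where a: "a \<in> kerD G act (Suc m)" and b: "b \<in> kerD G act (Suc n)"
    using assms by (auto simp: Pall_def Pn_eq_kerD)
  let ?k = "Suc (max m n)"
  have "a \<in> kerD G act ?k" "b \<in> kerD G act ?k"
    using kerD_mono a b by (meson max.cobounded1 max.cobounded2 Suc_le_mono subsetD)+
  then have "a + b \<in> kerD G act ?k" "a - b \<in> kerD G act ?k"
    by (simp_all add: kerD_add kerD_diff)
  moreover have "- a \<in> kerD G act (Suc m)"
    using kerD_uminus[OF a] .
  ultimately show "a + b \<in> Pall G act" "a - b \<in> Pall G act" "- a \<in> Pall G act"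
    unfolding Pall_def Pn_eq_kerD by blast+
  show "a * b \<in> Pall G act"
    using Pn_mult a b unfolding Pall_def Pn_eq_kerD by blast
qed

lemma Dop_invariant_mult:
  assumes "a \<in> invariants G act" "gs \<in> tuples G n"
  shows "Dop act n (a * b) gs = a * Dop act n b gs"
  using assms(2)
proof (induction n arbitrary: gs)
  case 0
  then show ?case by simp
next
  case (Suc n)
  then have "butlast gs \<in> tuples G n" "last gs \<in> carrier G"
    by (auto simp: tuples_def length_Suc_conv dest: in_set_butlastD)
  moreover have "act a (last gs) = a"
    using assms(1) \<open>last gs \<in> carrier G\<close> by (simp add: invariants_def)
  ultimately show ?case using Suc.IH by (simp add: act_mult algebra_simps)
qed

end

theorem proposition2p1:
  fixes G :: "('g, 'm) monoid_scheme" and act :: "'a::ring_1 \<Rightarrow> 'g \<Rightarrow> 'a"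
  assumes "right_ring_action G act"
  shows "(\<forall>a b. \<forall>g\<in>carrier G.
            Dop act 1 (a * b) [g] = act a g * Dop act 1 b [g] + Dop act 1 a [g] * b)
       \<and> (\<forall>m n a b. m + n \<ge> 1 \<longrightarrow> cochain_zero G m (Dop act m a) \<longrightarrow>
            cochain_zero G n (Dop act n b) \<longrightarrow> cochain_zero G (m + n - 1) (Dop act (m + n - 1) (a * b)))
       \<and> (\<forall>m n a b. a \<in> Pn G act m \<longrightarrow> b \<in> Pn G act n \<longrightarrow> a * b \<in> Pn G act (m + n))
       \<and> (0 \<in> Pall G act \<and> 1 \<in> Pall G act
          \<and> (\<forall>a\<in>Pall G act. \<forall>b\<in>Pall G act. a + b \<in> Pall G act \<and> a - b \<in> Pall G act
                 \<and> - a \<in> Pall G act \<and> a * b \<in> Pall G act))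
       \<and> (\<forall>n a b. a \<in> invariants G act \<longrightarrow>
            (\<forall>gs\<in>tuples G n. Dop act n (a * b) gs = a * Dop act n b gs))"
proof (intro conjI)
  show "\<forall>a b. \<forall>g\<in>carrier G.
            Dop act 1 (a * b) [g] = act a g * Dop act 1 b [g] + Dop act 1 a [g] * b"
    by (simp add: act_mult[OF assms] algebra_simps)
  show "\<forall>m n a b. m + n \<ge> 1 \<longrightarrow> cochain_zero G m (Dop act m a) \<longrightarrow>
            cochain_zero G n (Dop act n b) \<longrightarrow> cochain_zero G (m + n - 1) (Dop act (m + n - 1) (a * b))"
    using kerD_mult[OF assms] unfolding kerD_def by blast
  show "\<forall>m n a b. a \<in> Pn G act m \<longrightarrow> b \<in> Pn G act n \<longrightarrow> a * b \<in> Pn G act (m + n)"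
    using Pn_mult[OF assms] by blast
  show "0 \<in> Pall G act" "1 \<in> Pall G act"
    using zero_in_Pall[OF assms] one_in_Pall[OF assms] .
  show "\<forall>a\<in>Pall G act. \<forall>b\<in>Pall G act. a + b \<in> Pall G act \<and> a - b \<in> Pall G act
                 \<and> - a \<in> Pall G act \<and> a * b \<in> Pall G act"
    by (intro ballI conjI Pall_closed[OF assms])
  show "\<forall>n a b. a \<in> invariants G act \<longrightarrow>
            (\<forall>gs\<in>tuples G n. Dop act n (a * b) gs = a * Dop act n b gs)"
    using Dop_invariant_mult[OF assms] by blast
qed

end
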